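(* Consider a traffic network and user population as described in the context, and let $\boldsymbol{\tau}^*=\{\tau^*_e\}_{e\in E}$ be a vector of edge tolls that is market-clearing, i.e. there is an equilibrium (path flow $\bm{f}^*$, outside-option flow $\bm{f}^*_o$) under $\boldsymbol{\tau}^*$ whose edge flows $x^*_e=\sum_{u\in\mathcal{U}}\sum_{P\in\mathcal{P}_u:e\in P}f^*_{P,u}$ satisfy $x^*_e\le c_e$ for all $e\in E$, with $\tau^*_e=0$ for every edge with $x^*_e<c_e$ and $\tau^*_e\ge 0$ for every edge with $x^*_e=c_e$. Then $(\bm{f}^*,\bm{f}^*_o)$ is an optimal solution of the system optimization problem $$\min_{\bm{f},\bm{f}_o}\ \sum_{u\in\mathcal{U}}\Big(v_u\sum_{P\in\mathcal{P}_u}l_Pf_{P,u}+\lambda_uf_{o,u}\Big)$$ subject to $\sum_{P\in\mathcal{P}_u}f_{P,u}+f_{o,u}=1$ for all $u\in\mathcal{U}$; $f_{o,u}\in\{0,1\}$ and $f_{P,u}\in\{0,1\}$ for all $P\in\mathcal{P}_u$, $u\in\mathcal{U}$; and $\sum_{u\in\mathcal{U}}\sum_{P\in\mathcal{P}_u:e\in P}f_{P,u}\le c_e$ for all $e\in E$.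
   Context: The road network is a directed graph $G=(V,E)$; each edge $e$ has a capacity $c_e\ge 0$ and a fixed travel time $l_e\ge 0$. $\mathcal{U}$ is a finite set of users; user $u$ has an origin-destination pair $w_u$, a finite set $\mathcal{P}_u$ of paths (sequences of directed edges) from its origin to its destination, a value of time $v_u>0$, and a cost $\lambda_u$ for an outside option (not using the network). For a path $P$, $l_P=\sum_{e\in P}l_e$ and, for a toll vector $\boldsymbol{\tau}=\{\tau_e\}_{e\in E}$, $\tau_P=\sum_{e\in P}\tau_e$; the cost of path $P$ to user $u$ is $C_P(\boldsymbol{\tau})=v_ul_P+\tau_P$. An assignment consists of binary variables $f_{P,u}$ ($P\in\mathcal{P}_u$) and $f_{o,u}$ with $\sum_{P\in\mathcal{P}_u}f_{P,u}+f_{o,u}=1$ for each $u$. Given tolls $\boldsymbol{\tau}$, an assignment is an equilibrium if every user chooses a cost-minimizing option: if $f_{P,u}=1$ then $C_P(\boldsymbol{\tau})\le\min\{\min_{Q\in\mathcal{P}_u}C_Q(\boldsymbol{\tau}),\lambda_u\}$, and if $f_{o,u}=1$ then $\lambda_u\le C_P(\boldsymbol{\tau})$ for all $P\in\mathcal{P}_u$. Equilibria do not have to respect capacities. *)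

theory Defs
  imports Complex_Main
begin

text \<open>Assignment variables: fp u P (path P of user u), fo u (outside option), real-valued
  but constrained to {0,1}.\<close>

definition path_len :: "('e \<Rightarrow> real) \<Rightarrow> 'e list \<Rightarrow> real" where
  "path_len l P = sum_list (map l P)"

definition path_toll :: "('e \<Rightarrow> real) \<Rightarrow> 'e list \<Rightarrow> real" where
  "path_toll \<tau> P = sum_list (map \<tau> P)"

definition path_cost ::
  "('u \<Rightarrow> real) \<Rightarrow> ('e \<Rightarrow> real) \<Rightarrow> ('e \<Rightarrow> real) \<Rightarrow> 'u \<Rightarrow> 'e list \<Rightarrow> real" where
  "path_cost v l \<tau> u P = v u * path_len l P + path_toll \<tau> P"

definition assignment ::
  "'u set \<Rightarrow> ('u \<Rightarrow> 'e list set) \<Rightarrow> ('u \<Rightarrow> 'e list \<Rightarrow> real) \<Rightarrow> ('u \<Rightarrow> real) \<Rightarrow> bool" where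
  "assignment U Ps fp fo \<longleftrightarrow>
     (\<forall>u\<in>U. (\<forall>P\<in>Ps u. fp u P \<in> {0, 1}) \<and> fo u \<in> {0, 1} \<and>
             (\<Sum>P\<in>Ps u. fp u P) + fo u = 1)"

definition is_equilibrium ::
  "'u set \<Rightarrow> ('u \<Rightarrow> 'e list set) \<Rightarrow> ('u \<Rightarrow> real) \<Rightarrow> ('e \<Rightarrow> real) \<Rightarrow> ('u \<Rightarrow> real)
   \<Rightarrow> ('e \<Rightarrow> real) \<Rightarrow> ('u \<Rightarrow> 'e list \<Rightarrow> real) \<Rightarrow> ('u \<Rightarrow> real) \<Rightarrow> bool" where
  "is_equilibrium U Ps v l lam \<tau> fp fo \<longleftrightarrow>
     assignment U Ps fp fo \<and>
     (\<forall>u\<in>U.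
        (\<forall>P\<in>Ps u. fp u P = 1 \<longrightarrow>
            (\<forall>Q\<in>Ps u. path_cost v l \<tau> u P \<le> path_cost v l \<tau> u Q) \<and>
            path_cost v l \<tau> u P \<le> lam u) \<and>
        (fo u = 1 \<longrightarrow> (\<forall>P\<in>Ps u. lam u \<le> path_cost v l \<tau> u P)))"

definition edge_flow ::
  "'u set \<Rightarrow> ('u \<Rightarrow> 'e list set) \<Rightarrow> ('u \<Rightarrow> 'e list \<Rightarrow> real) \<Rightarrow> 'e \<Rightarrow> real" where
  "edge_flow U Ps fp e = (\<Sum>u\<in>U. \<Sum>P\<in>{P\<in>Ps u. e \<in> set P}. fp u P)"

definition system_cost ::
  "'u set \<Rightarrow> ('u \<Rightarrow> 'e list set) \<Rightarrow> ('u \<Rightarrow> real) \<Rightarrow> ('e \<Rightarrow> real) \<Rightarrow> ('u \<Rightarrow> real)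
   \<Rightarrow> ('u \<Rightarrow> 'e list \<Rightarrow> real) \<Rightarrow> ('u \<Rightarrow> real) \<Rightarrow> real" where
  "system_cost U Ps v l lam fp fo =
     (\<Sum>u\<in>U. v u * (\<Sum>P\<in>Ps u. path_len l P * fp u P) + lam u * fo u)"

definition so_feasible ::
  "'e set \<Rightarrow> ('e \<Rightarrow> real) \<Rightarrow> 'u set \<Rightarrow> ('u \<Rightarrow> 'e list set)
   \<Rightarrow> ('u \<Rightarrow> 'e list \<Rightarrow> real) \<Rightarrow> ('u \<Rightarrow> real) \<Rightarrow> bool" where
  "so_feasible E c U Ps fp fo \<longleftrightarrow>
     assignment U Ps fp fo \<and> (\<forall>e\<in>E. edge_flow U Ps fp e \<le> c e)"

definition so_optimal ::
  "'e set \<Rightarrow> ('e \<Rightarrow> real) \<Rightarrow> 'u set \<Rightarrow> ('u \<Rightarrow> 'e list set) \<Rightarrow> ('u \<Rightarrow> real)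
   \<Rightarrow> ('e \<Rightarrow> real) \<Rightarrow> ('u \<Rightarrow> real) \<Rightarrow> ('u \<Rightarrow> 'e list \<Rightarrow> real) \<Rightarrow> ('u \<Rightarrow> real) \<Rightarrow> bool" where
  "so_optimal E c U Ps v l lam fp fo \<longleftrightarrow>
     so_feasible E c U Ps fp fo \<and>
     (\<forall>g go. so_feasible E c U Ps g go \<longrightarrow>
        system_cost U Ps v l lam fp fo \<le> system_cost U Ps v l lam g go)"

end

theory Submission
  imports Defs
begin

text \<open>This is complementary slackness. Charging every user the tolls turns the system cost into
  the total tolled cost minus the toll revenue. In equilibrium each user picks a cheapest option,
  so the equilibrium minimises the total tolled cost over all assignments. Tolls are nonnegative
  and vanish on edges with spare capacity, so the equilibrium revenue is the sum of
  \<open>\<tau>\<^sub>e c\<^sub>e\<close>, which bounds the revenue of every capacity-feasible assignment.\<close>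

definition tolled_cost ::
  "'u set \<Rightarrow> ('u \<Rightarrow> 'e list set) \<Rightarrow> ('u \<Rightarrow> real) \<Rightarrow> ('e \<Rightarrow> real) \<Rightarrow> ('u \<Rightarrow> real)
   \<Rightarrow> ('e \<Rightarrow> real) \<Rightarrow> ('u \<Rightarrow> 'e list \<Rightarrow> real) \<Rightarrow> ('u \<Rightarrow> real) \<Rightarrow> real" where
  "tolled_cost U Ps v l lam \<tau> g go =
     (\<Sum>u\<in>U. (\<Sum>P\<in>Ps u. path_cost v l \<tau> u P * g u P) + lam u * go u)"

lemma path_toll_eq_sum_set:
  "distinct P \<Longrightarrow> path_toll \<tau> P = sum \<tau> (set P)"
  by (simp add: path_toll_def sum_list_distinct_conv_sum_set)

lemma sum_path_tolls_eq_sum_edge_tolls: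
  assumes "finite E" and "finite U" and "\<forall>u\<in>U. finite (Ps u)"
    and paths: "\<forall>u\<in>U. \<forall>P\<in>Ps u. set P \<subseteq> E \<and> distinct P"
  shows "(\<Sum>u\<in>U. \<Sum>P\<in>Ps u. path_toll \<tau> P * g u P) = (\<Sum>e\<in>E. \<tau> e * edge_flow U Ps g e)"
proof -
  have "(\<Sum>P\<in>Ps u. path_toll \<tau> P * g u P)
      = (\<Sum>e\<in>E. \<Sum>P\<in>{P\<in>Ps u. e \<in> set P}. \<tau> e * g u P)" if "u \<in> U" for u
  proof -
    have "(\<Sum>P\<in>Ps u. path_toll \<tau> P * g u P)
        = (\<Sum>P\<in>Ps u. \<Sum>e\<in>{e\<in>E. e \<in> set P}. \<tau> e * g u P)"
    proof (rule sum.cong)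
      fix P assume "P \<in> Ps u"
      with paths \<open>u \<in> U\<close> have "set P \<subseteq> E" "distinct P" by auto
      then have "{e\<in>E. e \<in> set P} = set P" by blast
      with \<open>distinct P\<close> show "path_toll \<tau> P * g u P = (\<Sum>e\<in>{e\<in>E. e \<in> set P}. \<tau> e * g u P)"
        by (simp add: path_toll_eq_sum_set sum_distrib_right)
    qed simp
    also have "\<dots> = (\<Sum>e\<in>E. \<Sum>P\<in>{P\<in>Ps u. e \<in> set P}. \<tau> e * g u P)"
      using assms that by (intro sum.swap_restrict) auto
    finally show ?thesis .
  qed
  then have "(\<Sum>u\<in>U. \<Sum>P\<in>Ps u. path_toll \<tau> P * g u P)
      = (\<Sum>u\<in>U. \<Sum>e\<in>E. \<Sum>P\<in>{P\<in>Ps u. e \<in> set P}. \<tau> e * g u P)"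
    by (rule sum.cong[OF refl])
  also have "\<dots> = (\<Sum>e\<in>E. \<tau> e * edge_flow U Ps g e)"
    by (subst sum.swap) (simp add: edge_flow_def sum_distrib_left)
  finally show ?thesis .
qed

lemma tolled_cost_eq_system_cost_plus_revenue:
  assumes "finite E" and "finite U" and "\<forall>u\<in>U. finite (Ps u)"
    and "\<forall>u\<in>U. \<forall>P\<in>Ps u. set P \<subseteq> E \<and> distinct P"
  shows "tolled_cost U Ps v l lam \<tau> g go
       = system_cost U Ps v l lam g go + (\<Sum>e\<in>E. \<tau> e * edge_flow U Ps g e)"
proof -
  have "tolled_cost U Ps v l lam \<tau> g go
      = system_cost U Ps v l lam g go + (\<Sum>u\<in>U. \<Sum>P\<in>Ps u. path_toll \<tau> P * g u P)"
    unfolding tolled_cost_def system_cost_def path_cost_def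
    by (simp add: distrib_right sum_distrib_left mult.assoc sum.distrib)
  with sum_path_tolls_eq_sum_edge_tolls[OF assms] show ?thesis by simp
qed

lemma weighted_cost_ge_lower_bound:
  fixes C :: "'p \<Rightarrow> real"
  assumes "finite S" and "\<forall>P\<in>S. m \<le> C P" and "m \<le> lam"
    and "\<forall>P\<in>S. g P \<ge> 0" and "go \<ge> 0" and "(\<Sum>P\<in>S. g P) + go = 1"
  shows "m \<le> (\<Sum>P\<in>S. C P * g P) + lam * go"
proof -
  have "m = (\<Sum>P\<in>S. m * g P) + m * go"
    using assms(6) by (metis distrib_left mult.right_neutral sum_distrib_left)
  also have "\<dots> \<le> (\<Sum>P\<in>S. C P * g P) + lam * go"
    using assms by (intro add_mono sum_mono mult_right_mono) auto
  finally show ?thesis .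
qed

lemma weighted_cost_minimal_if_supported_on_minimizers:
  fixes C :: "'p \<Rightarrow> real"
  assumes "finite S"
    and f_sum: "(\<Sum>P\<in>S. f P) + fo = 1"
    and f_path: "\<forall>P\<in>S. f P \<noteq> 0 \<longrightarrow> (\<forall>Q\<in>S. C P \<le> C Q) \<and> C P \<le> lam"
    and f_out: "fo \<noteq> 0 \<longrightarrow> (\<forall>Q\<in>S. lam \<le> C Q)"
    and "\<forall>P\<in>S. g P \<ge> 0" and "go \<ge> 0" and "(\<Sum>P\<in>S. g P) + go = 1"
  shows "(\<Sum>P\<in>S. C P * f P) + lam * fo \<le> (\<Sum>P\<in>S. C P * g P) + lam * go"
proof -
  obtain m where lower: "\<forall>P\<in>S. m \<le> C P" "m \<le> lam"
    and attained: "\<forall>P\<in>S. f P \<noteq> 0 \<longrightarrow> C P = m" "fo \<noteq> 0 \<longrightarrow> lam = m"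
  proof (cases "fo = 0")
    case True
    with f_sum obtain P0 where "P0 \<in> S" "f P0 \<noteq> 0"
      by (metis add.right_neutral sum.neutral zero_neq_one)
    with f_path f_out show ?thesis
      by (intro that[of "C P0"]) (auto intro: order.antisym)
  next
    case False
    with f_path f_out show ?thesis
      by (intro that[of lam]) (auto intro: order.antisym)
  qed
  have "(\<Sum>P\<in>S. C P * f P) + lam * fo = (\<Sum>P\<in>S. m * f P) + m * fo"
    using attained by (intro arg_cong2[where f = "(+)"] sum.cong) auto
  also have "\<dots> = m * ((\<Sum>P\<in>S. f P) + fo)"
    by (simp add: sum_distrib_left distrib_left)
  also have "\<dots> = m"
    using f_sum by simp
  also have "\<dots> \<le> (\<Sum>P\<in>S. C P * g P) + lam * go"
    using assms lower by (intro weighted_cost_ge_lower_bound) auto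
  finally show ?thesis .
qed

lemma equilibrium_minimizes_tolled_cost:
  assumes finP: "\<forall>u\<in>U. finite (Ps u)"
    and eq: "is_equilibrium U Ps v l lam \<tau> fp fo" and g: "assignment U Ps g go"
  shows "tolled_cost U Ps v l lam \<tau> fp fo \<le> tolled_cost U Ps v l lam \<tau> g go"
  unfolding tolled_cost_def
proof (rule sum_mono)
  fix u assume "u \<in> U"
  with eq have binary: "\<forall>P\<in>Ps u. fp u P \<in> {0, 1}" "fo u \<in> {0, 1}"
    and choice: "\<forall>P\<in>Ps u. fp u P = 1 \<longrightarrow>
        (\<forall>Q\<in>Ps u. path_cost v l \<tau> u P \<le> path_cost v l \<tau> u Q) \<and> path_cost v l \<tau> u P \<le> lam u"
      "fo u = 1 \<longrightarrow> (\<forall>Q\<in>Ps u. lam u \<le> path_cost v l \<tau> u Q)"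
    and "(\<Sum>P\<in>Ps u. fp u P) + fo u = 1"
    by (auto simp: is_equilibrium_def assignment_def)
  moreover from g \<open>u \<in> U\<close> have "\<forall>P\<in>Ps u. g u P \<ge> 0" "go u \<ge> 0"
    and "(\<Sum>P\<in>Ps u. g u P) + go u = 1"
    unfolding assignment_def by fastforce+
  moreover from binary choice
  have "\<forall>P\<in>Ps u. fp u P \<noteq> 0 \<longrightarrow>
        (\<forall>Q\<in>Ps u. path_cost v l \<tau> u P \<le> path_cost v l \<tau> u Q) \<and> path_cost v l \<tau> u P \<le> lam u"
    and "fo u \<noteq> 0 \<longrightarrow> (\<forall>Q\<in>Ps u. lam u \<le> path_cost v l \<tau> u Q)"
    by auto
  ultimately show "(\<Sum>P\<in>Ps u. path_cost v l \<tau> u P * fp u P) + lam u * fo u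
      \<le> (\<Sum>P\<in>Ps u. path_cost v l \<tau> u P * g u P) + lam u * go u"
    using finP \<open>u \<in> U\<close> by (intro weighted_cost_minimal_if_supported_on_minimizers) auto
qed

lemma revenue_le_market_clearing_revenue:
  fixes \<tau> x xc c :: "'e \<Rightarrow> real"
  assumes "finite E"
    and "\<forall>e\<in>E. \<tau> e \<ge> 0" and "\<forall>e\<in>E. xc e < c e \<longrightarrow> \<tau> e = 0"
    and "\<forall>e\<in>E. x e \<le> c e" and "\<forall>e\<in>E. xc e \<le> c e"
  shows "(\<Sum>e\<in>E. \<tau> e * x e) \<le> (\<Sum>e\<in>E. \<tau> e * xc e)"
proof -
  have "(\<Sum>e\<in>E. \<tau> e * x e) \<le> (\<Sum>e\<in>E. \<tau> e * c e)"
    using assms by (intro sum_mono mult_left_mono) auto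
  also have "\<dots> = (\<Sum>e\<in>E. \<tau> e * xc e)"
    using assms by (intro sum.cong) (auto simp: order.order_iff_strict)
  finally show ?thesis .
qed

theorem theorem1:
  fixes E :: "'e set" and c l \<tau> :: "'e \<Rightarrow> real"
    and U :: "'u set" and Ps :: "'u \<Rightarrow> 'e list set"
    and v lam :: "'u \<Rightarrow> real"
    and fp :: "'u \<Rightarrow> 'e list \<Rightarrow> real" and fo :: "'u \<Rightarrow> real"
  assumes finE: "finite E" and finU: "finite U"
    and finP: "\<forall>u\<in>U. finite (Ps u)"
    and paths: "\<forall>u\<in>U. \<forall>P\<in>Ps u. set P \<subseteq> E \<and> distinct P"
    and cap: "\<forall>e\<in>E. c e \<ge> 0" and len: "\<forall>e\<in>E. l e \<ge> 0"
    and vot: "\<forall>u\<in>U. v u > 0"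
    and eq: "is_equilibrium U Ps v l lam \<tau> fp fo"
    and feas: "\<forall>e\<in>E. edge_flow U Ps fp e \<le> c e"
    and slack: "\<forall>e\<in>E. edge_flow U Ps fp e < c e \<longrightarrow> \<tau> e = 0"
    and tight: "\<forall>e\<in>E. edge_flow U Ps fp e = c e \<longrightarrow> \<tau> e \<ge> 0"
  shows "so_optimal E c U Ps v l lam fp fo"
  unfolding so_optimal_def so_feasible_def
proof (intro conjI allI impI)
  show "assignment U Ps fp fo" using eq by (simp add: is_equilibrium_def)
  show "\<forall>e\<in>E. edge_flow U Ps fp e \<le> c e" by (rule feas)
  fix g go assume g: "assignment U Ps g go \<and> (\<forall>e\<in>E. edge_flow U Ps g e \<le> c e)"
  have "\<forall>e\<in>E. \<tau> e \<ge> 0"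
    using feas slack tight by (auto simp: order.order_iff_strict)
  then have "(\<Sum>e\<in>E. \<tau> e * edge_flow U Ps g e) \<le> (\<Sum>e\<in>E. \<tau> e * edge_flow U Ps fp e)"
    using finE slack feas g by (intro revenue_le_market_clearing_revenue) auto
  moreover have "tolled_cost U Ps v l lam \<tau> fp fo \<le> tolled_cost U Ps v l lam \<tau> g go"
    using finP eq g by (intro equilibrium_minimizes_tolled_cost) auto
  ultimately show "system_cost U Ps v l lam fp fo \<le> system_cost U Ps v l lam g go"
    using tolled_cost_eq_system_cost_plus_revenue[OF finE finU finP paths] by fastforce
qed

end
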